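(* Assume the setting and assumptions (A1)–(A5) described in the context, and assume additionally that the push-forward measures $\iota_n(M_n)$ converge weakly to a probability measure $P$ on $\bar L$. Then the operator $A:\mathcal F\to\mathcal F$ is symmetric with respect to the inner product $(f,g)=\int_{\bar L}fg\,dP$, i.e. $\int (Af)g\,dP=\int f(Ag)\,dP$ for all $f,g\in\mathcal F$.
   Context: $L=\bigsqcup_{n\ge0}L_n$ is a graded set with $L_0$ a singleton and each $L_n$ finite; $p^\downarrow:L\times L\to[0,\infty)$ vanishes unless $|\lambda|=|\mu|+1$ and $\sum_{\mu\in L_{|\lambda|-1}}p^\downarrow(\lambda,\mu)=1$ for $|\lambda|\ge1$. $\{M_n\}$ is a coherent system (probability measures on $L_n$ with $\sum_{\lambda\in L_n}M_n(\lambda)p^\downarrow(\lambda,\mu)=M_{n-1}(\mu)$) with $M_n(\lambda)>0$ everywhere; $p^\uparrow(\lambda,\nu)=\frac{M_{n+1}(\nu)}{M_n(\lambda)}p^\downarrow(\nu,\lambda)$; $(T_ng)(\lambda)=\sum_{\nu\in L_{n+1}}p^\uparrow(\lambda,\nu)\sum_{\tilde\lambda\in L_n}p^\downarrow(\nu,\tilde\lambda)g(\tilde\lambda)$ on real functions on $L_n$ (norm $\|g\|_n=\sup|g|$). $\bar L$ is a topological space, $\iota_n:L_n\to\bar L$ injective, $\pi_n:C(\bar L)\to C(L_n)$, $(\pi_nf)(\lambda)=f(\iota_n(\lambda))$, $C(\bar L)$ with sup norm. Assumptions: (A1) $\bar L$ compact metrizable separable; (A2) every nonempty open set meets $\iota_n(L_n)$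 for all large $n$; (A3) there is a dense subspace $\mathcal F\subset C(\bar L)$ with an exhaustive ascending sequence of finite-dimensional subspaces $\mathcal F^m$ such that for each $m$ and all large $n$, $\pi_n$ is injective on $\mathcal F^m$ and $\pi_n(\mathcal F^m)$ is $T_n$-invariant; (A4) there are $\varepsilon_n>0$, $\varepsilon_n\to0$, such that for $f\in\mathcal F^m$ the elements $g_n\in\mathcal F^m$ with $\pi_n(g_n)=\varepsilon_n^{-1}(T_n-\mathbf 1)\pi_n f$ converge in $\mathcal F^m$ to a limit $Af$, defining $A:\mathcal F\to\mathcal F$; (A5) $1\in\mathcal F$. *)

theory Defs
  imports "HOL-Probability.Probability"
begin

definition pup :: "(nat \<Rightarrow> 'a \<Rightarrow> real) \<Rightarrow> ('a \<Rightarrow> 'a \<Rightarrow> real) \<Rightarrow> nat \<Rightarrow> 'a \<Rightarrow> 'a \<Rightarrow> real" where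
  "pup M pdown n lam nu = M (Suc n) nu / M n lam * pdown nu lam"

text \<open>The operator T_n on real functions on L_n (functions are 'a => real, only values on L_n matter).\<close>
definition Top :: "(nat \<Rightarrow> 'a set) \<Rightarrow> (nat \<Rightarrow> 'a \<Rightarrow> real) \<Rightarrow> ('a \<Rightarrow> 'a \<Rightarrow> real)
    \<Rightarrow> nat \<Rightarrow> ('a \<Rightarrow> real) \<Rightarrow> 'a \<Rightarrow> real" where
  "Top L M pdown n g lam =
     (\<Sum>nu\<in>L (Suc n). pup M pdown n lam nu * (\<Sum>lam'\<in>L n. pdown nu lam' * g lam'))"

definition proj :: "(nat \<Rightarrow> 'a \<Rightarrow> 'b) \<Rightarrow> nat \<Rightarrow> ('b \<Rightarrow> real) \<Rightarrow> 'a \<Rightarrow> real" where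
  "proj \<iota> n f lam = f (\<iota> n lam)"

definition fspan :: "('b \<Rightarrow> real) set \<Rightarrow> ('b \<Rightarrow> real) set" where
  "fspan B = {(\<lambda>x. \<Sum>b\<in>B. c b * b x) | c. True}"

end

theory Submission
  imports Defs
begin

text \<open>Since p-up is defined by detailed balance, M_n(lam) p-up(lam, nu) = M_{n+1}(nu) p-down(nu, lam),
the up-down operator T_n is self-adjoint for the weights M_n, and so is the discrete generator
(T_n - 1) / eps_n. By (A3) and (A4) this generator applied to pi_n f is, uniformly on L_n, close
to A f, so by weak convergence its M_n-pairing with pi_n g tends to the integral of (A f) g.
Both sides of the identity are therefore limits of the same sequence.\<close>

lemma fspan_diff_divide:
  assumes "g \<in> fspan B" "f \<in> fspan B"
  shows "(\<lambda>x. (g x - f x) / (c::real)) \<in> fspan B"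
proof -
  obtain a where a: "g = (\<lambda>x. \<Sum>b\<in>B. a b * b x)" using assms(1) unfolding fspan_def by blast
  obtain d where d: "f = (\<lambda>x. \<Sum>b\<in>B. d b * b x)" using assms(2) unfolding fspan_def by blast
  have "(\<lambda>x. (g x - f x) / c) = (\<lambda>x. \<Sum>b\<in>B. ((a b - d b) / c) * b x)"
    by (simp add: a d sum_subtractf[symmetric] sum_divide_distrib algebra_simps)
  then show ?thesis unfolding fspan_def by (auto intro!: exI[of _ "\<lambda>b. (a b - d b) / c"])
qed

lemma Top_weighted_pairing:
  assumes "finite (L n)" "finite (L (Suc n))" "\<And>lam. lam \<in> L n \<Longrightarrow> M n lam \<noteq> 0"
  shows "(\<Sum>lam\<in>L n. M n lam * Top L M pdown n h lam * k lam) =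
     (\<Sum>nu\<in>L (Suc n). M (Suc n) nu * (\<Sum>l\<in>L n. pdown nu l * h l) * (\<Sum>l\<in>L n. pdown nu l * k l))"
proof -
  have "(\<Sum>lam\<in>L n. M n lam * Top L M pdown n h lam * k lam) =
    (\<Sum>lam\<in>L n. \<Sum>nu\<in>L (Suc n). M (Suc n) nu * (\<Sum>l\<in>L n. pdown nu l * h l) * (pdown nu lam * k lam))"
  proof (rule sum.cong[OF refl])
    fix lam assume "lam \<in> L n"
    then have "M n lam \<noteq> 0" using assms(3) by blast
    then show "M n lam * Top L M pdown n h lam * k lam =
      (\<Sum>nu\<in>L (Suc n). M (Suc n) nu * (\<Sum>l\<in>L n. pdown nu l * h l) * (pdown nu lam * k lam))"
      unfolding Top_def pup_def sum_distrib_left sum_distrib_right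
      by (intro sum.cong) (simp_all add: field_simps)
  qed
  also have "\<dots> = (\<Sum>nu\<in>L (Suc n). \<Sum>lam\<in>L n. M (Suc n) nu * (\<Sum>l\<in>L n. pdown nu l * h l) * (pdown nu lam * k lam))"
    by (rule sum.swap)
  also have "\<dots> = (\<Sum>nu\<in>L (Suc n). M (Suc n) nu * (\<Sum>l\<in>L n. pdown nu l * h l) * (\<Sum>l\<in>L n. pdown nu l * k l))"
    by (simp add: sum_distrib_left)
  finally show ?thesis .
qed

lemma Top_self_adjoint:
  assumes "finite (L n)" "finite (L (Suc n))" "\<And>lam. lam \<in> L n \<Longrightarrow> M n lam \<noteq> 0"
  shows "(\<Sum>lam\<in>L n. M n lam * Top L M pdown n h lam * k lam) =
     (\<Sum>lam\<in>L n. M n lam * Top L M pdown n k lam * h lam)"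
  using Top_weighted_pairing[of L n M pdown h k, OF assms]
    Top_weighted_pairing[of L n M pdown k h, OF assms]
  by (simp add: mult_ac)

lemma Top_generator_self_adjoint:
  assumes "finite (L n)" "finite (L (Suc n))" "\<And>lam. lam \<in> L n \<Longrightarrow> M n lam \<noteq> 0"
  shows "(\<Sum>lam\<in>L n. M n lam * ((Top L M pdown n h lam - h lam) / e) * k lam) =
     (\<Sum>lam\<in>L n. M n lam * ((Top L M pdown n k lam - k lam) / e) * h lam)"
proof -
  have "(\<Sum>lam\<in>L n. M n lam * ((Top L M pdown n h lam - h lam) / e) * k lam) =
      ((\<Sum>lam\<in>L n. M n lam * Top L M pdown n h lam * k lam) - (\<Sum>lam\<in>L n. M n lam * h lam * k lam)) / e"
    by (simp add: sum_subtractf[symmetric] sum_divide_distrib algebra_simps diff_divide_distrib)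
  also have "\<dots> = ((\<Sum>lam\<in>L n. M n lam * Top L M pdown n k lam * h lam) - (\<Sum>lam\<in>L n. M n lam * k lam * h lam)) / e"
    by (subst Top_self_adjoint[of L n M pdown h k, OF assms]) (simp_all add: mult_ac)
  also have "\<dots> = (\<Sum>lam\<in>L n. M n lam * ((Top L M pdown n k lam - k lam) / e) * h lam)"
    by (simp add: sum_subtractf[symmetric] sum_divide_distrib algebra_simps diff_divide_distrib)
  finally show ?thesis .
qed

lemma weighted_sum_abs_le:
  fixes w u v :: "'a \<Rightarrow> real"
  assumes "finite S" "\<And>x. x \<in> S \<Longrightarrow> w x \<ge> 0" "sum w S = 1"
    "\<And>x. x \<in> S \<Longrightarrow> \<bar>u x\<bar> \<le> e" "\<And>x. x \<in> S \<Longrightarrow> \<bar>v x\<bar> \<le> B"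
  shows "\<bar>\<Sum>x\<in>S. w x * u x * v x\<bar> \<le> e * B"
proof -
  have "\<bar>\<Sum>x\<in>S. w x * u x * v x\<bar> \<le> (\<Sum>x\<in>S. \<bar>w x * u x * v x\<bar>)" by (rule sum_abs)
  also have "\<dots> \<le> (\<Sum>x\<in>S. w x * (e * B))"
  proof (rule sum_mono)
    fix x assume x: "x \<in> S"
    have "\<bar>u x * v x\<bar> \<le> e * B" unfolding abs_mult
      using assms(4,5)[OF x] by (meson abs_ge_zero mult_mono order_trans)
    then show "\<bar>w x * u x * v x\<bar> \<le> w x * (e * B)"
      using assms(2)[OF x] by (simp add: abs_mult mult.assoc mult_left_mono)
  qed
  also have "\<dots> = e * B" using assms(3) by (simp add: sum_distrib_right[symmetric])
  finally show ?thesis .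
qed

lemma weighted_sum_tendsto_of_uniform_approx:
  fixes w d :: "nat \<Rightarrow> 'a \<Rightarrow> real" and a g :: "'b \<Rightarrow> real"
  assumes "\<And>n. finite (S n)" "\<And>n x. x \<in> S n \<Longrightarrow> w n x \<ge> 0" "\<And>n. sum (w n) (S n) = 1"
    and g_bound: "\<And>y. \<bar>g y\<bar> \<le> B"
    and approx: "\<And>e. e > 0 \<Longrightarrow> \<forall>\<^sub>F n in sequentially. \<forall>x\<in>S n. \<bar>d n x - a (\<iota> n x)\<bar> \<le> e"
    and lim: "(\<lambda>n. \<Sum>x\<in>S n. w n x * (a (\<iota> n x) * g (\<iota> n x))) \<longlonglongrightarrow> l"
  shows "(\<lambda>n. \<Sum>x\<in>S n. w n x * d n x * g (\<iota> n x)) \<longlonglongrightarrow> l"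
proof (rule Lim_transform[OF lim], rule LIMSEQ_I)
  fix r :: real assume "r > 0"
  have "B \<ge> 0" using g_bound by (meson abs_ge_zero order_trans)
  define e where "e = r / (B + 1)"
  have "e > 0" using \<open>r > 0\<close> \<open>B \<ge> 0\<close> by (simp add: e_def)
  have "e * B < r"
    using \<open>r > 0\<close> \<open>B \<ge> 0\<close> by (simp add: e_def field_simps)
  obtain N where N: "\<And>n. n \<ge> N \<Longrightarrow> \<forall>x\<in>S n. \<bar>d n x - a (\<iota> n x)\<bar> \<le> e"
    using approx[OF \<open>e > 0\<close>] unfolding eventually_sequentially by blast
  show "\<exists>N. \<forall>n\<ge>N. norm ((\<Sum>x\<in>S n. w n x * d n x * g (\<iota> n x)) -
                        (\<Sum>x\<in>S n. w n x * (a (\<iota> n x) * g (\<iota> n x))) - 0) < r"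
  proof (intro exI allI impI)
    fix n assume "n \<ge> N"
    have "\<bar>\<Sum>x\<in>S n. w n x * (d n x - a (\<iota> n x)) * g (\<iota> n x)\<bar> \<le> e * B"
      using N[OF \<open>n \<ge> N\<close>] by (intro weighted_sum_abs_le) (use assms in auto)
    then show "norm ((\<Sum>x\<in>S n. w n x * d n x * g (\<iota> n x)) -
                        (\<Sum>x\<in>S n. w n x * (a (\<iota> n x) * g (\<iota> n x))) - 0) < r"
      using \<open>e * B < r\<close> by (simp add: sum_subtractf[symmetric] algebra_simps)
  qed
qed

lemma generator_uniform_approx:
  fixes T :: "nat \<Rightarrow> ('a \<Rightarrow> real) \<Rightarrow> 'a \<Rightarrow> real"
  assumes "f \<in> fspan B"
    and invariant: "\<forall>\<^sub>F n in sequentially. \<forall>f\<in>fspan B. \<exists>g\<in>fspan B.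
                      \<forall>lam\<in>L n. proj \<iota> n g lam = T n (proj \<iota> n f) lam"
    and lift_tendsto: "\<And>e. e > 0 \<Longrightarrow> \<forall>\<^sub>F n in sequentially. \<forall>g\<in>fspan B.
                 (\<forall>lam\<in>L n. proj \<iota> n g lam = (T n (proj \<iota> n f) lam - proj \<iota> n f lam) / \<epsilon> n)
                 \<longrightarrow> (\<forall>x. \<bar>g x - a x\<bar> \<le> e)"
    and "e > 0"
  shows "\<forall>\<^sub>F n in sequentially. \<forall>lam\<in>L n.
           \<bar>(T n (proj \<iota> n f) lam - proj \<iota> n f lam) / \<epsilon> n - a (\<iota> n lam)\<bar> \<le> e"
  using invariant lift_tendsto[OF \<open>e > 0\<close>]
proof eventually_elim
  case (elim n)
  obtain g where g: "g \<in> fspan B" "\<forall>lam\<in>L n. proj \<iota> n g lam = T n (proj \<iota> n f) lam"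
    using elim(1) \<open>f \<in> fspan B\<close> by blast
  define G where "G x = (g x - f x) / \<epsilon> n" for x
  have "G \<in> fspan B"
    unfolding G_def by (rule fspan_diff_divide[OF g(1) \<open>f \<in> fspan B\<close>])
  moreover have G_lift: "\<forall>lam\<in>L n. proj \<iota> n G lam = (T n (proj \<iota> n f) lam - proj \<iota> n f lam) / \<epsilon> n"
    using g(2) by (simp add: G_def proj_def)
  ultimately have "\<forall>x. \<bar>G x - a x\<bar> \<le> e" using elim(2) by blast
  then show ?case using G_lift unfolding proj_def by metis
qed

theorem proposition1p7:
  fixes L :: "nat \<Rightarrow> 'a set"
    and pdown :: "'a \<Rightarrow> 'a \<Rightarrow> real"
    and M :: "nat \<Rightarrow> 'a \<Rightarrow> real"
    and \<iota> :: "nat \<Rightarrow> 'a \<Rightarrow> 'b::metric_space"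
    and F :: "('b \<Rightarrow> real) set"
    and Fm :: "nat \<Rightarrow> ('b \<Rightarrow> real) set"
    and \<epsilon> :: "nat \<Rightarrow> real"
    and A :: "('b \<Rightarrow> real) \<Rightarrow> ('b \<Rightarrow> real)"
    and P :: "'b measure"
  assumes L_fin: "\<And>n. finite (L n)"
    and L_disj: "\<And>n m. n \<noteq> m \<Longrightarrow> L n \<inter> L m = {}"
    and L0: "\<exists>z. L 0 = {z}"
    and pdown_nonneg: "\<And>lam mu. pdown lam mu \<ge> 0"
    and pdown_grade: "\<And>lam mu. pdown lam mu \<noteq> 0 \<Longrightarrow> (\<exists>n. lam \<in> L (Suc n) \<and> mu \<in> L n)"
    and pdown_sum: "\<And>n lam. lam \<in> L (Suc n) \<Longrightarrow> (\<Sum>mu\<in>L n. pdown lam mu) = 1"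
    and M_pos: "\<And>n lam. lam \<in> L n \<Longrightarrow> M n lam > 0"
    and M_prob: "\<And>n. (\<Sum>lam\<in>L n. M n lam) = 1"
    and M_coherent: "\<And>n mu. mu \<in> L n \<Longrightarrow> (\<Sum>lam\<in>L (Suc n). M (Suc n) lam * pdown lam mu) = M n mu"
    and \<iota>_inj: "\<And>n. inj_on (\<iota> n) (L n)"
    and A1: "compact (UNIV :: 'b set)"
    and A2: "\<And>U. open U \<Longrightarrow> U \<noteq> {} \<Longrightarrow> (\<forall>\<^sub>F n in sequentially. U \<inter> \<iota> n ` L n \<noteq> {})"
    and F_cont: "\<And>f. f \<in> F \<Longrightarrow> continuous_on UNIV f"
    and F_dense: "\<And>f e. continuous_on UNIV f \<Longrightarrow> e > 0 \<Longrightarrow> (\<exists>g\<in>F. \<forall>x. \<bar>f x - g x\<bar> < e)"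
    and Fm_fd: "\<And>m. \<exists>B. finite B \<and> Fm m = fspan B"
    and Fm_mono: "\<And>m. Fm m \<subseteq> Fm (Suc m)"
    and Fm_exh: "(\<Union>m. Fm m) = F"
    and A3_inj: "\<And>m. \<forall>\<^sub>F n in sequentially. inj_on (proj \<iota> n) (Fm m)"
    and A3_inv: "\<And>m. \<forall>\<^sub>F n in sequentially. \<forall>f\<in>Fm m. \<exists>g\<in>Fm m.
                    \<forall>lam\<in>L n. proj \<iota> n g lam = Top L M pdown n (proj \<iota> n f) lam"
    and eps_pos: "\<And>n. \<epsilon> n > 0"
    and eps_lim: "\<epsilon> \<longlonglongrightarrow> 0"
    and A4: "\<And>m f. f \<in> Fm m \<Longrightarrow> A f \<in> Fm m \<and>
              (\<forall>e>0. \<forall>\<^sub>F n in sequentially. \<forall>g\<in>Fm m.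
                 (\<forall>lam\<in>L n. proj \<iota> n g lam = (Top L M pdown n (proj \<iota> n f) lam - proj \<iota> n f lam) / \<epsilon> n)
                 \<longrightarrow> (\<forall>x. \<bar>g x - A f x\<bar> \<le> e))"
    and A5: "(\<lambda>_. 1) \<in> F"
    and P_prob: "prob_space P"
    and P_borel: "sets P = sets borel"
    and weak_conv: "\<And>f. continuous_on UNIV f \<Longrightarrow>
                      (\<lambda>n. \<Sum>lam\<in>L n. M n lam * f (\<iota> n lam)) \<longlonglongrightarrow> (\<integral>x. f x \<partial>P)"
  shows "\<forall>f\<in>F. \<forall>g\<in>F. (\<integral>x. A f x * g x \<partial>P) = (\<integral>x. f x * A g x \<partial>P)"
proof (intro ballI)
  define D where "D h k n = (\<Sum>lam\<in>L n.
      M n lam * ((Top L M pdown n (proj \<iota> n h) lam - proj \<iota> n h lam) / \<epsilon> n) * k (\<iota> n lam))"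
    for h k :: "'b \<Rightarrow> real" and n
  have M_nonneg: "\<And>n lam. lam \<in> L n \<Longrightarrow> M n lam \<ge> 0" using M_pos less_imp_le by blast
  have D_tendsto: "D h k \<longlonglongrightarrow> (\<integral>x. A h x * k x \<partial>P)" if "h \<in> F" "k \<in> F" for h k
  proof -
    obtain m where "h \<in> Fm m" using Fm_exh \<open>h \<in> F\<close> by blast
    obtain B where B: "Fm m = fspan B" using Fm_fd by blast
    have "A h \<in> F" using A4[OF \<open>h \<in> Fm m\<close>] Fm_exh by blast
    have "continuous_on UNIV k" using F_cont \<open>k \<in> F\<close> by blast
    then obtain Bk where "\<And>y. \<bar>k y\<bar> \<le> Bk"
      using continuous_on_compact_bound[OF A1] by (metis UNIV_I real_norm_def)
    show ?thesis unfolding D_def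
    proof (rule weighted_sum_tendsto_of_uniform_approx[where w = M and g = k and a = "A h" and \<iota> = \<iota>
          and d = "\<lambda>n lam. (Top L M pdown n (proj \<iota> n h) lam - proj \<iota> n h lam) / \<epsilon> n"])
      show "\<forall>\<^sub>F n in sequentially. \<forall>lam\<in>L n. \<bar>(Top L M pdown n (proj \<iota> n h) lam - proj \<iota> n h lam) / \<epsilon> n
                - A h (\<iota> n lam)\<bar> \<le> e" if "e > 0" for e
        using A3_inv[of m] A4[OF \<open>h \<in> Fm m\<close>] \<open>e > 0\<close> \<open>h \<in> Fm m\<close>
        unfolding B by (intro generator_uniform_approx) auto
      show "(\<lambda>n. \<Sum>lam\<in>L n. M n lam * (A h (\<iota> n lam) * k (\<iota> n lam))) \<longlonglongrightarrow> (\<integral>x. A h x * k x \<partial>P)"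
        using F_cont \<open>A h \<in> F\<close> \<open>continuous_on UNIV k\<close> by (intro weak_conv continuous_on_mult) auto
    qed (use L_fin M_nonneg M_prob \<open>\<And>y. \<bar>k y\<bar> \<le> Bk\<close> in auto)
  qed
  have D_sym: "D f g = D g f" for f g
    using Top_generator_self_adjoint[of L _ M pdown "proj \<iota> _ f" "\<epsilon> _" "proj \<iota> _ g"] L_fin M_pos
    by (fastforce simp: D_def proj_def)
  fix f g assume "f \<in> F" "g \<in> F"
  have "D f g \<longlonglongrightarrow> (\<integral>x. f x * A g x \<partial>P)"
    using D_tendsto[OF \<open>g \<in> F\<close> \<open>f \<in> F\<close>] by (simp add: D_sym mult.commute)
  with D_tendsto[OF \<open>f \<in> F\<close> \<open>g \<in> F\<close>] show "(\<integral>x. A f x * g x \<partial>P) = (\<integral>x. f x * A g x \<partial>P)"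
    by (rule LIMSEQ_unique)
qed

end
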